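(* Let $(\star)$ be a linear system over $\mathbb{F}_q$ in $k$ variables, and suppose that $(\star)$ is equivalent to a linear system $(\star')$ whose coefficient matrix (after reordering the variables) has the block form $A'=\begin{pmatrix}A_1&0\\0&A_2\end{pmatrix}$ with $A_1\in\mathbb{F}_q^{m_1\times k_1}$, $A_2\in\mathbb{F}_q^{m_2\times k_2}$ and $m_1,m_2,k_1,k_2\ne0$. Then $(\star)$ is temperate if and only if the systems with coefficient matrices $A_1$ and $A_2$ are both temperate.
   Context: A linear system with coefficient matrix $A\in\mathbb{F}_q^{m\times k}$ has solutions $(x_1,\dots,x_k)\in(\mathbb{F}_q^n)^k$ with $\sum_j a_{ij}x_j=0$ for all $i$. Two systems are equivalent if each equation of one is a linear combination of the equations of the other. A solution is generic if every $b\in\mathbb{F}_q^k$ with $b_1+\dots+b_k=0$ and $\sum_jb_jx_j=0$ lies in the row space of the coefficient matrix. A system is temperate if there exist constants $\beta,\gamma>0$ with $\gamma<q$ such that for every $n$ every $S\subseteq\mathbb{F}_q^n$ with $|S|\ge\beta\gamma^n$ contains a generic solution in $S^k$. *)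

theory Defs
  imports Complex_Main
begin

text \<open>The field F_q is a type 'a of class finite and field; q = CARD('a).
A vector of F_q^n is a function nat => 'a vanishing outside {..<n}.
A coefficient matrix in F_q^(m x k) is a function nat => nat => 'a, of which only the
entries with row index < m and column index < k are relevant.
A k-tuple (x_1,...,x_k) of vectors is a function nat => (nat => 'a), index j < k.\<close>

definition vecs :: "nat \<Rightarrow> (nat \<Rightarrow> 'a::zero) set" where
  "vecs n = {x. \<forall>t\<ge>n. x t = 0}"

definition is_solution ::
  "nat \<Rightarrow> nat \<Rightarrow> (nat \<Rightarrow> nat \<Rightarrow> 'a::field) \<Rightarrow> nat \<Rightarrow> (nat \<Rightarrow> nat \<Rightarrow> 'a) \<Rightarrow> bool" where
  "is_solution m k A n x \<longleftrightarrow>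
     (\<forall>j<k. x j \<in> vecs n) \<and>
     (\<forall>i<m. \<forall>t<n. (\<Sum>j<k. A i j * x j t) = 0)"

definition in_row_space ::
  "nat \<Rightarrow> nat \<Rightarrow> (nat \<Rightarrow> nat \<Rightarrow> 'a::field) \<Rightarrow> (nat \<Rightarrow> 'a) \<Rightarrow> bool" where
  "in_row_space m k A b \<longleftrightarrow> (\<exists>c. \<forall>j<k. b j = (\<Sum>i<m. c i * A i j))"

definition is_generic_solution ::
  "nat \<Rightarrow> nat \<Rightarrow> (nat \<Rightarrow> nat \<Rightarrow> 'a::field) \<Rightarrow> nat \<Rightarrow> (nat \<Rightarrow> nat \<Rightarrow> 'a) \<Rightarrow> bool" where
  "is_generic_solution m k A n x \<longleftrightarrow>
     is_solution m k A n x \<and>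
     (\<forall>b. (\<Sum>j<k. b j) = 0 \<and> (\<forall>t<n. (\<Sum>j<k. b j * x j t) = 0)
          \<longrightarrow> in_row_space m k A b)"

definition temperate ::
  "nat \<Rightarrow> nat \<Rightarrow> (nat \<Rightarrow> nat \<Rightarrow> 'a::{finite,field}) \<Rightarrow> bool" where
  "temperate m k A \<longleftrightarrow>
     (\<exists>\<beta> \<gamma>::real. \<beta> > 0 \<and> \<gamma> > 0 \<and> \<gamma> < real (card (UNIV :: 'a set)) \<and>
        (\<forall>n. \<forall>S. S \<subseteq> vecs n \<and> real (card S) \<ge> \<beta> * \<gamma> ^ n \<longrightarrow>
            (\<exists>x. (\<forall>j<k. x j \<in> S) \<and> is_generic_solution m k A n x)))"

definition equivalent_systems ::
  "nat \<Rightarrow> (nat \<Rightarrow> nat \<Rightarrow> 'a::field) \<Rightarrow> nat \<Rightarrow> (nat \<Rightarrow> nat \<Rightarrow> 'a) \<Rightarrow> nat \<Rightarrow> bool" where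
  "equivalent_systems m A m' B k \<longleftrightarrow>
     (\<forall>i<m. in_row_space m' k B (A i)) \<and> (\<forall>i<m'. in_row_space m k A (B i))"

definition block_diag ::
  "nat \<Rightarrow> nat \<Rightarrow> (nat \<Rightarrow> nat \<Rightarrow> 'a::zero) \<Rightarrow> (nat \<Rightarrow> nat \<Rightarrow> 'a) \<Rightarrow> nat \<Rightarrow> nat \<Rightarrow> 'a" where
  "block_diag m1 k1 A1 A2 i j =
     (if i < m1 then (if j < k1 then A1 i j else 0)
      else (if j < k1 then 0 else A2 (i - m1) (j - k1)))"

end

theory Submission
  imports Defs "HOL-Library.FuncSet"
begin

text \<open>Genericity and temperateness depend only on the row space of the coefficient matrix and are
  invariant under permuting the variables, so the system may be taken block diagonal. A generic
  solution of the block system restricts to generic solutions of the two blocks. Conversely, in a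
  large set \<open>S\<close> choose a coordinate \<open>t0\<close> and a value \<open>a\<close> such that both the elements of \<open>S\<close>
  with value \<open>a\<close> at \<open>t0\<close> and the others are numerous. Take a generic solution \<open>z\<close> of the second
  block among the former, a set \<open>T\<close> of at most \<open>k2\<close> coordinates on which the dependencies of
  \<open>z\<close> are already determined, and a generic solution \<open>y\<close> of the first block among a large part
  of the latter whose elements agree on \<open>t0\<close> and on \<open>T\<close>. The differing values at \<open>t0\<close> separate
  the two blocks, so \<open>(y, z)\<close> is generic for the block system. The density losses, a factor
  \<open>q\<close> and a factor \<open>2 n q^(k2+1)\<close>, are absorbed by a slightly larger growth rate \<open>\<gamma>\<close>.\<close>

section \<open>Counting and growth estimates\<close>

lemma sum_lessThan_add: "(\<Sum>j<k1 + k2. f j) = (\<Sum>j<k1. f j) + (\<Sum>j<k2. f (k1 + j))"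
  for k1 k2 :: nat
  by (induction k2) (auto simp: add_ac)

lemma exists_ge_average:
  fixes f :: "'b \<Rightarrow> nat"
  assumes "finite A" "A \<noteq> {}"
  obtains a where "a \<in> A" "sum f A \<le> card A * f a"
proof -
  have "Max (f ` A) \<in> f ` A" using assms by simp
  then obtain a where a: "a \<in> A" "f a = Max (f ` A)" by (metis imageE)
  have "sum f A \<le> card A * f a"
    using sum_bounded_above[of A f "f a"] assms a by simp
  with a(1) that show ?thesis by blast
qed

lemma exists_large_fibre:
  assumes "finite S" "finite Y" "Y \<noteq> {}" "f ` S \<subseteq> Y"
  obtains y where "y \<in> Y" "card S \<le> card Y * card {s\<in>S. f s = y}"
proof -
  have "S = (\<Union>y\<in>Y. {s\<in>S. f s = y})" using assms(4) by auto
  then have le: "card S \<le> (\<Sum>y\<in>Y. card {s\<in>S. f s = y})"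
    using card_UN_le[OF assms(2)] by metis
  obtain y where y: "y \<in> Y" "(\<Sum>y\<in>Y. card {s\<in>S. f s = y}) \<le> card Y * card {s\<in>S. f s = y}"
    by (rule exists_ge_average[OF assms(2,3)])
  show ?thesis using that y le by (meson le_trans)
qed

lemma card_le_sum_card_differ:
  assumes "S \<subseteq> vecs n" "finite S" "v \<in> vecs n"
  shows "card S \<le> 1 + (\<Sum>t<n. card {s\<in>S. s t \<noteq> v t})"
proof -
  have "S - {v} \<subseteq> (\<Union>t<n. {s\<in>S. s t \<noteq> v t})"
  proof
    fix s assume s: "s \<in> S - {v}"
    then obtain t where t: "s t \<noteq> v t" by auto
    have "t < n"
    proof (rule ccontr)
      assume "\<not> t < n"
      then have "s t = 0" "v t = 0" using s assms by (auto simp: vecs_def)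
      with t show False by simp
    qed
    with s t show "s \<in> (\<Union>t<n. {s\<in>S. s t \<noteq> v t})" by auto
  qed
  then have "card (S - {v}) \<le> card (\<Union>t<n. {s\<in>S. s t \<noteq> v t})"
    using assms(2) by (intro card_mono) auto
  also have "\<dots> \<le> (\<Sum>t<n. card {s\<in>S. s t \<noteq> v t})" by (rule card_UN_le) simp
  finally show ?thesis by (simp add: card_Diff_singleton_if split: if_splits)
qed

text \<open>Every coordinate has a most frequent value in \<open>S\<close>. At most one element of \<open>S\<close> agrees
  with all of these values, so some coordinate \<open>t0\<close> carries at least a \<open>1/n\<close> share of
  the disagreements.\<close>
lemma exists_popular_coordinate:
  fixes S :: "(nat \<Rightarrow> 'a::{finite,zero}) set"
  assumes S: "S \<subseteq> vecs n" and two: "2 \<le> card S"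
  obtains t0 a where "t0 < n" "card S \<le> card (UNIV :: 'a set) * card {s\<in>S. s t0 = a}"
    "card S \<le> 2 * n * card {s\<in>S. s t0 \<noteq> a}"
proof -
  have fin: "finite S" using two card.infinite by fastforce
  have "\<exists>a. card S \<le> card (UNIV :: 'a set) * card {s\<in>S. s t = a}" for t
    by (rule exists_large_fibre[where f = "\<lambda>s. s t", OF fin finite_UNIV UNIV_not_empty subset_UNIV])
      blast
  then obtain mode where mode: "\<And>t. card S \<le> card (UNIV :: 'a set) * card {s\<in>S. s t = mode t}"
    using choice[of "\<lambda>t a. card S \<le> card (UNIV :: 'a set) * card {s\<in>S. s t = a}"] by blast
  define v where "v t = (if t < n then mode t else 0)" for t
  have "v \<in> vecs n" by (simp add: vecs_def v_def)
  with S fin have diff: "card S \<le> 1 + (\<Sum>t<n. card {s\<in>S. s t \<noteq> v t})"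
    by (rule card_le_sum_card_differ)
  have "n \<noteq> 0"
  proof
    assume "n = 0"
    with diff two show False by simp
  qed
  then obtain t0 where "t0 < n"
    and "(\<Sum>t<n. card {s\<in>S. s t \<noteq> v t}) \<le> n * card {s\<in>S. s t0 \<noteq> v t0}"
    using exists_ge_average[of "{..<n}" "\<lambda>t. card {s\<in>S. s t \<noteq> v t}"] by auto
  with diff have t0: "t0 < n" "card S \<le> 1 + n * card {s\<in>S. s t0 \<noteq> v t0}" by simp_all
  show ?thesis
  proof (rule that[OF t0(1)])
    show "card S \<le> card (UNIV :: 'a set) * card {s\<in>S. s t0 = v t0}" using mode t0(1) by (simp add: v_def)
    show "card S \<le> 2 * n * card {s\<in>S. s t0 \<noteq> v t0}" using t0(2) two by linarith
  qed
qed

lemma exists_large_agreeing_subset: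
  fixes S :: "('b \<Rightarrow> 'a::finite) set"
  assumes "finite S" "finite T"
  obtains C where "C \<subseteq> S" "\<And>s s' t. s \<in> C \<Longrightarrow> s' \<in> C \<Longrightarrow> t \<in> T \<Longrightarrow> s t = s' t"
    "card S \<le> card (UNIV :: 'a set) ^ card T * card C"
proof -
  let ?Y = "PiE T (\<lambda>_. UNIV :: 'a set)"
  have Y: "finite ?Y" "?Y \<noteq> {}" "card ?Y = card (UNIV :: 'a set) ^ card T"
    using assms(2) by (simp_all add: finite_PiE card_PiE PiE_eq_empty_iff)
  have "(\<lambda>s. restrict s T) ` S \<subseteq> ?Y" by auto
  then obtain p where p: "card S \<le> card ?Y * card {s\<in>S. restrict s T = p}"
    using exists_large_fibre[OF assms(1) Y(1,2)] by blast
  show ?thesis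
  proof (rule that)
    show "{s\<in>S. restrict s T = p} \<subseteq> S" by blast
    show "s t = s' t" if "s \<in> {s\<in>S. restrict s T = p}" "s' \<in> {s\<in>S. restrict s T = p}" "t \<in> T"
      for s s' t
      using that by (metis (mono_tags, lifting) mem_Collect_eq restrict_apply')
    show "card S \<le> card (UNIV :: 'a set) ^ card T * card {s\<in>S. restrict s T = p}"
      using p Y(3) by simp
  qed
qed

text \<open>The vectors \<open>(z 0 t, \<dots>, z (k - 1) t)\<close>, for all \<open>t\<close>, span a space of dimension at most
  \<open>k\<close>, which is already spanned by at most \<open>k\<close> of them.\<close>
lemma exists_determining_coordinates:
  fixes z :: "nat \<Rightarrow> 'b \<Rightarrow> 'a::field"
  shows "\<exists>T. finite T \<and> card T \<le> k \<and>
    (\<forall>b. (\<forall>t\<in>T. (\<Sum>j<k. b j * z j t) = 0) \<longrightarrow> (\<forall>t. (\<Sum>j<k. b j * z j t) = 0))"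
proof (induction k)
  case 0
  show ?case by (rule exI[of _ "{}"]) simp
next
  case (Suc k)
  then obtain T where T: "finite T" "card T \<le> k"
    and IH: "\<And>b. \<forall>t\<in>T. (\<Sum>j<k. b j * z j t) = 0 \<Longrightarrow> \<forall>t. (\<Sum>j<k. b j * z j t) = 0"
    by blast
  show ?case
  proof (cases "\<forall>b. (\<forall>t\<in>T. (\<Sum>j<Suc k. b j * z j t) = 0) \<longrightarrow> (\<forall>t. (\<Sum>j<Suc k. b j * z j t) = 0)")
    case True
    then show ?thesis using T by (intro exI[of _ T]) auto
  next
    case False
    then obtain b0 t0 where b0_T: "\<forall>t\<in>T. (\<Sum>j<Suc k. b0 j * z j t) = 0"
      and b0_t0: "(\<Sum>j<Suc k. b0 j * z j t0) \<noteq> 0" by blast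
    have "b0 k \<noteq> 0"
    proof
      assume "b0 k = 0"
      then have "\<forall>t. (\<Sum>j<k. b0 j * z j t) = 0" using b0_T by (intro IH) simp
      with b0_t0 \<open>b0 k = 0\<close> show False by simp
    qed
    show ?thesis
    proof (rule exI[of _ "insert t0 T"], intro conjI allI impI)
      show "finite (insert t0 T)" "card (insert t0 T) \<le> Suc k"
        using T by (simp_all add: card_insert_if)
      fix b :: "nat \<Rightarrow> 'a" and t
      assume b: "\<forall>t\<in>insert t0 T. (\<Sum>j<Suc k. b j * z j t) = 0"
      define \<mu> where "\<mu> = b k / b0 k"
      \<comment> \<open>\<open>b - \<mu> b0\<close> has no \<open>k\<close>-th entry, so the induction hypothesis applies to it\<close>
      have reduce: "(\<Sum>j<Suc k. b j * z j s) - \<mu> * (\<Sum>j<Suc k. b0 j * z j s)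
          = (\<Sum>j<k. (b j - \<mu> * b0 j) * z j s)" for s
        using \<open>b0 k \<noteq> 0\<close>
        by (simp add: \<mu>_def algebra_simps sum_subtractf sum_distrib_left)
      have "\<forall>s. (\<Sum>j<k. (b j - \<mu> * b0 j) * z j s) = 0"
        by (rule IH) (use b b0_T in \<open>simp flip: reduce\<close>)
      then have proportional: "(\<Sum>j<Suc k. b j * z j s) = \<mu> * (\<Sum>j<Suc k. b0 j * z j s)" for s
        using reduce[of s] by simp
      have "\<mu> = 0" using proportional[of t0] b b0_t0 by simp
      then show "(\<Sum>j<Suc k. b j * z j t) = 0" using proportional[of t] by simp
    qed
  qed
qed

lemma exists_exponential_dominating_linear:
  fixes \<gamma>0 q :: real
  assumes "0 < \<gamma>0" "\<gamma>0 < q"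
  obtains \<gamma> c where "\<gamma>0 < \<gamma>" "\<gamma> < q" "0 < c" "\<And>n. real n * \<gamma>0 ^ n \<le> c * \<gamma> ^ n"
proof
  define \<gamma> where "\<gamma> = (\<gamma>0 + q) / 2"
  define h where "h = \<gamma> / \<gamma>0 - 1"
  show "\<gamma>0 < \<gamma>" "\<gamma> < q" using assms by (simp_all add: \<gamma>_def)
  then show h: "0 < 1 / h" using assms by (simp add: h_def)
  fix n
  have "real n * h \<le> (1 + h) ^ n"
    using Bernoulli_inequality[of h n] h by simp
  then have "real n * h * \<gamma>0 ^ n \<le> (\<gamma> / \<gamma>0) ^ n * \<gamma>0 ^ n"
    using assms by (intro mult_right_mono) (simp_all add: h_def)
  then have "real n * h * \<gamma>0 ^ n \<le> \<gamma> ^ n" using assms by (simp add: power_divide)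
  then show "real n * \<gamma>0 ^ n \<le> 1 / h * \<gamma> ^ n" using h by (simp add: field_simps)
qed

lemma exists_growth_constants:
  fixes q \<beta>1 \<gamma>1 \<beta>2 \<gamma>2 K :: real
  assumes "2 \<le> q" "0 < \<beta>1" "0 < \<gamma>1" "\<gamma>1 < q" "0 < \<beta>2" "0 < \<gamma>2" "\<gamma>2 < q" "0 < K"
  obtains \<beta> \<gamma> where "0 < \<beta>" "0 < \<gamma>" "\<gamma> < q" "\<And>n. 2 \<le> \<beta> * \<gamma> ^ n"
    "\<And>n s c. \<beta> * \<gamma> ^ n \<le> s \<Longrightarrow> s \<le> 2 * real n * K * c \<Longrightarrow> \<beta>1 * \<gamma>1 ^ n \<le> c"
    "\<And>n s z. \<beta> * \<gamma> ^ n \<le> s \<Longrightarrow> s \<le> q * z \<Longrightarrow> \<beta>2 * \<gamma>2 ^ n \<le> z"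
proof -
  define \<gamma>0 where "\<gamma>0 = max 1 (max \<gamma>1 \<gamma>2)"
  have "0 < \<gamma>0" "\<gamma>0 < q" using assms by (auto simp: \<gamma>0_def)
  then obtain \<gamma> d where \<gamma>: "\<gamma>0 < \<gamma>" "\<gamma> < q" and "0 < d" and dom: "\<And>n. real n * \<gamma>0 ^ n \<le> d * \<gamma> ^ n"
    by (rule exists_exponential_dominating_linear) (rule that)
  define \<beta> where "\<beta> = max 2 (max (q * \<beta>2) (2 * K * \<beta>1 * d))"
  have "1 \<le> \<gamma>" "\<gamma>1 \<le> \<gamma>0" "\<gamma>2 \<le> \<gamma>0" using \<gamma> by (auto simp: \<gamma>0_def)
  have two: "2 \<le> \<beta> * \<gamma> ^ n" for n
    using \<open>1 \<le> \<gamma>\<close> mult_mono[of 2 \<beta> 1 "\<gamma> ^ n"] by (simp add: \<beta>_def)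
  show ?thesis
  proof (rule that[OF _ _ \<gamma>(2) two])
    show "0 < \<beta>" "0 < \<gamma>" using \<gamma> \<open>1 \<le> \<gamma>\<close> by (auto simp: \<beta>_def)
  next
    fix n s c assume size: "\<beta> * \<gamma> ^ n \<le> s" and loss: "s \<le> 2 * real n * K * c"
    have "\<gamma>1 ^ n \<le> \<gamma>0 ^ n" using assms \<open>\<gamma>1 \<le> \<gamma>0\<close> by (intro power_mono) simp_all
    then have "real n * \<gamma>1 ^ n \<le> real n * \<gamma>0 ^ n" by (rule mult_left_mono) simp
    also have "\<dots> \<le> d * \<gamma> ^ n" by (rule dom)
    finally have "2 * K * \<beta>1 * (real n * \<gamma>1 ^ n) \<le> 2 * K * \<beta>1 * (d * \<gamma> ^ n)"
      using assms by (intro mult_left_mono) simp_all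
    also have "\<dots> = (2 * K * \<beta>1 * d) * \<gamma> ^ n" by (simp add: mult.assoc)
    also have "\<dots> \<le> \<beta> * \<gamma> ^ n" using \<open>1 \<le> \<gamma>\<close> by (intro mult_right_mono) (auto simp: \<beta>_def)
    finally have "(2 * K * real n) * (\<beta>1 * \<gamma>1 ^ n) \<le> (2 * K * real n) * c"
      using size loss by (simp add: algebra_simps)
    moreover have "n \<noteq> 0" using size loss two[of n] by (intro notI) simp
    ultimately show "\<beta>1 * \<gamma>1 ^ n \<le> c" using assms by simp
  next
    fix n s z assume size: "\<beta> * \<gamma> ^ n \<le> s" and loss: "s \<le> q * z"
    have "\<gamma>2 ^ n \<le> \<gamma> ^ n" using assms \<open>\<gamma>2 \<le> \<gamma>0\<close> \<gamma> by (intro power_mono) simp_all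
    then have "q * (\<beta>2 * \<gamma>2 ^ n) \<le> (q * \<beta>2) * \<gamma> ^ n"
      using assms by (simp add: mult.assoc mult_left_mono)
    also have "\<dots> \<le> \<beta> * \<gamma> ^ n" using \<open>1 \<le> \<gamma>\<close> by (intro mult_right_mono) (auto simp: \<beta>_def)
    finally have "q * (\<beta>2 * \<gamma>2 ^ n) \<le> q * z" using size loss by linarith
    then show "\<beta>2 * \<gamma>2 ^ n \<le> z" using assms(1) by simp
  qed
qed

section \<open>Row spaces\<close>

lemma in_row_space_row: "i < m \<Longrightarrow> in_row_space m k A (A i)"
  unfolding in_row_space_def
  by (rule exI[of _ "\<lambda>l. if l = i then 1 else 0"]) (simp add: if_distrib[where f="\<lambda>z. z * _"] cong: if_cong)

lemma in_row_space_zero: "in_row_space m k A (\<lambda>_. 0)"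
  unfolding in_row_space_def by (rule exI[of _ "\<lambda>_. 0"]) simp

lemma in_row_space_cong: "(\<And>j. j < k \<Longrightarrow> b j = b' j) \<Longrightarrow> in_row_space m k A b \<longleftrightarrow> in_row_space m k A b'"
  unfolding in_row_space_def by simp

lemma in_row_space_trans:
  assumes "\<forall>i<m. in_row_space m' k B (A i)" "in_row_space m k A b"
  shows "in_row_space m' k B b"
proof -
  obtain c where c: "\<forall>j<k. b j = (\<Sum>i<m. c i * A i j)" using assms(2) by (auto simp: in_row_space_def)
  have "\<forall>i. \<exists>d. i < m \<longrightarrow> (\<forall>j<k. A i j = (\<Sum>l<m'. d l * B l j))"
    using assms(1) by (auto simp: in_row_space_def)
  then obtain d where d: "\<And>i j. i < m \<Longrightarrow> j < k \<Longrightarrow> A i j = (\<Sum>l<m'. d i l * B l j)"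
    by metis
  show ?thesis unfolding in_row_space_def
  proof (rule exI[of _ "\<lambda>l. \<Sum>i<m. c i * d i l"], intro allI impI)
    fix j assume "j < k"
    then have "b j = (\<Sum>i<m. c i * (\<Sum>l<m'. d i l * B l j))" using c d by (auto intro: sum.cong)
    also have "\<dots> = (\<Sum>l<m'. (\<Sum>i<m. c i * d i l) * B l j)"
      by (simp add: sum_distrib_left sum_distrib_right sum.swap[of _ "{..<m}"] mult.assoc)
    finally show "b j = (\<Sum>l<m'. (\<Sum>i<m. c i * d i l) * B l j)" .
  qed
qed

lemma equivalent_systems_row_space:
  "equivalent_systems m A m' B k \<Longrightarrow> in_row_space m k A = in_row_space m' k B"
  unfolding equivalent_systems_def by (blast intro: in_row_space_trans)

lemma in_row_space_permute:
  assumes \<sigma>: "bij_betw \<sigma> {..<k} {..<k}" and B: "\<And>i j. i < m \<Longrightarrow> j < k \<Longrightarrow> B i (\<sigma> j) = C i j"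
  shows "in_row_space m k B b \<longleftrightarrow> in_row_space m k C (b \<circ> \<sigma>)"
proof -
  have all: "(\<forall>j<k. P j) \<longleftrightarrow> (\<forall>j<k. P (\<sigma> j))" for P
    using \<sigma> by (metis bij_betw_iff_bijections lessThan_iff)
  have "(\<forall>j<k. b j = (\<Sum>i<m. c i * B i j)) \<longleftrightarrow> (\<forall>j<k. b (\<sigma> j) = (\<Sum>i<m. c i * C i j))" for c
    unfolding all[of "\<lambda>j. b j = (\<Sum>i<m. c i * B i j)"] by (auto simp: B)
  then show ?thesis unfolding in_row_space_def by simp
qed

lemma in_row_space_block_diag:
  fixes A1 A2 :: "nat \<Rightarrow> nat \<Rightarrow> 'a::field"
  shows "in_row_space (m1 + m2) (k1 + k2) (block_diag m1 k1 A1 A2) b \<longleftrightarrow>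
    in_row_space m1 k1 A1 b \<and> in_row_space m2 k2 A2 (\<lambda>j. b (k1 + j))"
proof
  assume "in_row_space (m1 + m2) (k1 + k2) (block_diag m1 k1 A1 A2) b"
  then obtain c where c: "\<forall>j<k1 + k2. b j = (\<Sum>i<m1 + m2. c i * block_diag m1 k1 A1 A2 i j)"
    by (auto simp: in_row_space_def)
  have "in_row_space m1 k1 A1 b" unfolding in_row_space_def
  proof (intro exI[of _ c] allI impI)
    fix j assume "j < k1"
    then have "b j = (\<Sum>i<m1 + m2. c i * block_diag m1 k1 A1 A2 i j)" using c by simp
    also have "\<dots> = (\<Sum>i<m1. c i * A1 i j)" using \<open>j < k1\<close> by (simp add: sum_lessThan_add block_diag_def)
    finally show "b j = (\<Sum>i<m1. c i * A1 i j)" .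
  qed
  moreover have "in_row_space m2 k2 A2 (\<lambda>j. b (k1 + j))" unfolding in_row_space_def
  proof (intro exI[of _ "\<lambda>i. c (m1 + i)"] allI impI)
    fix j assume "j < k2"
    then have "b (k1 + j) = (\<Sum>i<m1 + m2. c i * block_diag m1 k1 A1 A2 i (k1 + j))" using c by simp
    also have "\<dots> = (\<Sum>i<m2. c (m1 + i) * A2 i j)" by (simp add: sum_lessThan_add block_diag_def)
    finally show "b (k1 + j) = (\<Sum>i<m2. c (m1 + i) * A2 i j)" .
  qed
  ultimately show "in_row_space m1 k1 A1 b \<and> in_row_space m2 k2 A2 (\<lambda>j. b (k1 + j))" ..
next
  assume "in_row_space m1 k1 A1 b \<and> in_row_space m2 k2 A2 (\<lambda>j. b (k1 + j))"
  then obtain c1 c2 where c1: "\<forall>j<k1. b j = (\<Sum>i<m1. c1 i * A1 i j)"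
    and c2: "\<forall>j<k2. b (k1 + j) = (\<Sum>i<m2. c2 i * A2 i j)"
    by (auto simp: in_row_space_def)
  show "in_row_space (m1 + m2) (k1 + k2) (block_diag m1 k1 A1 A2) b" unfolding in_row_space_def
  proof (rule exI[of _ "\<lambda>i. if i < m1 then c1 i else c2 (i - m1)"], intro allI impI)
    fix j assume j: "j < k1 + k2"
    show "b j = (\<Sum>i<m1 + m2. (if i < m1 then c1 i else c2 (i - m1)) * block_diag m1 k1 A1 A2 i j)"
    proof (cases "j < k1")
      case True
      then show ?thesis using c1 by (simp add: sum_lessThan_add block_diag_def)
    next
      case False
      with j obtain j' where "j = k1 + j'" "j' < k2" by (metis add_diff_inverse_nat nat_add_left_cancel_less)
      then show ?thesis using c2 by (simp add: sum_lessThan_add block_diag_def)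
    qed
  qed
qed

section \<open>Genericity relative to a row space\<close>

definition is_dependency :: "nat \<Rightarrow> nat \<Rightarrow> (nat \<Rightarrow> nat \<Rightarrow> 'a::field) \<Rightarrow> (nat \<Rightarrow> 'a) \<Rightarrow> bool" where
  "is_dependency k n x b \<longleftrightarrow> (\<forall>t<n. (\<Sum>j<k. b j * x j t) = 0)"

text \<open>The predicate \<open>R\<close> on coefficient vectors stands for the row space of a coefficient matrix.\<close>

definition generic_wrt :: "((nat \<Rightarrow> 'a::field) \<Rightarrow> bool) \<Rightarrow> nat \<Rightarrow> nat \<Rightarrow> (nat \<Rightarrow> nat \<Rightarrow> 'a) \<Rightarrow> bool" where
  "generic_wrt R k n x \<longleftrightarrow> (\<forall>j<k. x j \<in> vecs n) \<and> (\<forall>b. R b \<longrightarrow> is_dependency k n x b) \<and>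
     (\<forall>b. (\<Sum>j<k. b j) = 0 \<and> is_dependency k n x b \<longrightarrow> R b)"

definition temperate_wrt :: "((nat \<Rightarrow> 'a::{finite,field}) \<Rightarrow> bool) \<Rightarrow> nat \<Rightarrow> bool" where
  "temperate_wrt R k \<longleftrightarrow> (\<exists>\<beta> \<gamma>::real. \<beta> > 0 \<and> \<gamma> > 0 \<and> \<gamma> < real (card (UNIV :: 'a set)) \<and>
     (\<forall>n S. S \<subseteq> vecs n \<and> real (card S) \<ge> \<beta> * \<gamma> ^ n \<longrightarrow>
        (\<exists>x. (\<forall>j<k. x j \<in> S) \<and> generic_wrt R k n x)))"

lemma temperate_wrtI:
  fixes R :: "(nat \<Rightarrow> 'a::{finite,field}) \<Rightarrow> bool"
  assumes "\<beta> > 0" "\<gamma> > 0" "\<gamma> < real (card (UNIV :: 'a set))"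
    and "\<And>n S. S \<subseteq> vecs n \<Longrightarrow> \<beta> * \<gamma> ^ n \<le> real (card S) \<Longrightarrow>
      \<exists>x. (\<forall>j<k. x j \<in> S) \<and> generic_wrt R k n x"
  shows "temperate_wrt R k"
  unfolding temperate_wrt_def using assms by blast

lemma is_dependency_if_in_row_space:
  assumes "\<forall>i<m. is_dependency k n x (A i)" "in_row_space m k A b"
  shows "is_dependency k n x b"
  unfolding is_dependency_def
proof (intro allI impI)
  fix t assume "t < n"
  obtain c where c: "\<forall>j<k. b j = (\<Sum>i<m. c i * A i j)" using assms(2) by (auto simp: in_row_space_def)
  then have "(\<Sum>j<k. b j * x j t) = (\<Sum>j<k. (\<Sum>i<m. c i * A i j) * x j t)" by simp
  also have "\<dots> = (\<Sum>i<m. c i * (\<Sum>j<k. A i j * x j t))"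
    by (simp add: sum_distrib_left sum_distrib_right sum.swap[of _ "{..<k}"] mult.assoc)
  also have "\<dots> = 0" using assms(1) \<open>t < n\<close> by (simp add: is_dependency_def)
  finally show "(\<Sum>j<k. b j * x j t) = 0" .
qed

lemma is_solution_iff:
  "is_solution m k A n x \<longleftrightarrow>
     (\<forall>j<k. x j \<in> vecs n) \<and> (\<forall>b. in_row_space m k A b \<longrightarrow> is_dependency k n x b)"
  using is_dependency_if_in_row_space[of m k n x A] in_row_space_row[of _ m k A]
  unfolding is_solution_def is_dependency_def by blast

lemma is_generic_solution_iff: "is_generic_solution m k A n x \<longleftrightarrow> generic_wrt (in_row_space m k A) k n x"
  unfolding is_generic_solution_def generic_wrt_def is_solution_iff is_dependency_def by blast

lemma temperate_iff: "temperate m k A \<longleftrightarrow> temperate_wrt (in_row_space m k A) k"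
  unfolding temperate_def temperate_wrt_def is_generic_solution_iff ..

text \<open>Transport along a map \<open>e\<close> of variables: \<open>E b\<close> is the coefficient vector \<open>b\<close> pushed
  forward along \<open>e\<close>, as expressed by \<open>push\<close>.\<close>

lemma generic_wrt_reindex:
  assumes gen: "generic_wrt R k n x"
    and into: "\<And>j. j < k' \<Longrightarrow> e j < k"
    and push: "\<And>b f. (\<Sum>j<k. E b j * f j) = (\<Sum>j<k'. b j * f (e j))"
    and rel: "\<And>b. R' b \<longleftrightarrow> R (E b)"
  shows "generic_wrt R' k' n (x \<circ> e)"
proof -
  have dep: "is_dependency k' n (x \<circ> e) b \<longleftrightarrow> is_dependency k n x (E b)" for b
    by (simp add: is_dependency_def push)
  have sum: "(\<Sum>j<k'. b j) = (\<Sum>j<k. E b j)" for b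
    using push[of b "\<lambda>_. 1"] by simp
  show ?thesis using gen into unfolding generic_wrt_def by (auto simp: dep sum rel)
qed

lemma temperate_wrt_reindex:
  fixes R :: "(nat \<Rightarrow> 'a::{finite,field}) \<Rightarrow> bool"
  assumes "temperate_wrt R k"
    and into: "\<And>j. j < k' \<Longrightarrow> e j < k"
    and push: "\<And>b f. (\<Sum>j<k. E b j * f j) = (\<Sum>j<k'. b j * f (e j))"
    and rel: "\<And>b. R' b \<longleftrightarrow> R (E b)"
  shows "temperate_wrt R' k'"
proof -
  obtain \<beta> \<gamma> :: real where \<beta>: "\<beta> > 0" and \<gamma>: "\<gamma> > 0" "\<gamma> < real (card (UNIV :: 'a set))"
    and large: "\<forall>n S. S \<subseteq> vecs n \<and> \<beta> * \<gamma> ^ n \<le> real (card S) \<longrightarrow>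
      (\<exists>x. (\<forall>j<k. x j \<in> S) \<and> generic_wrt R k n x)"
    using assms(1) unfolding temperate_wrt_def by blast
  show ?thesis
  proof (rule temperate_wrtI[OF \<beta> \<gamma>])
    fix n and S :: "(nat \<Rightarrow> 'a) set"
    assume "S \<subseteq> vecs n" "\<beta> * \<gamma> ^ n \<le> real (card S)"
    then obtain x where xS: "\<forall>j<k. x j \<in> S" and gen: "generic_wrt R k n x" using large by blast
    have "generic_wrt R' k' n (x \<circ> e)" using gen into push rel by (rule generic_wrt_reindex)
    then show "\<exists>x. (\<forall>j<k'. x j \<in> S) \<and> generic_wrt R' k' n x"
      using xS into by (intro exI[of _ "x \<circ> e"]) auto
  qed
qed

lemma temperate_wrt_permute:
  fixes R :: "(nat \<Rightarrow> 'a::{finite,field}) \<Rightarrow> bool"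
  assumes \<sigma>: "bij_betw \<sigma> {..<k} {..<k}"
    and rel: "\<And>b. R b \<longleftrightarrow> R' (b \<circ> \<sigma>)"
    and cong: "\<And>b b'. (\<And>j. j < k \<Longrightarrow> b j = b' j) \<Longrightarrow> R' b \<longleftrightarrow> R' b'"
  shows "temperate_wrt R k \<longleftrightarrow> temperate_wrt R' k"
proof -
  define \<tau> where "\<tau> = inv_into {..<k} \<sigma>"
  have \<tau>: "bij_betw \<tau> {..<k} {..<k}" using \<sigma> unfolding \<tau>_def by (rule bij_betw_inv_into)
  have \<tau>\<sigma>: "\<tau> (\<sigma> j) = j" "\<sigma> (\<tau> j) = j" if "j < k" for j
    using \<sigma> that unfolding \<tau>_def by (simp_all add: bij_betw_inv_into_left bij_betw_inv_into_right)
  have reindex: "(\<Sum>j<k. g j) = (\<Sum>j<k. g (\<pi> j))" if "bij_betw \<pi> {..<k} {..<k}" for \<pi> and g :: "nat \<Rightarrow> 'a"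
    using sum.reindex_bij_betw[OF that, of g] by simp
  show ?thesis
  proof
    assume "temperate_wrt R k"
    then show "temperate_wrt R' k"
    proof (rule temperate_wrt_reindex[where e = \<sigma> and E = "\<lambda>b. b \<circ> \<tau>"])
      show "\<sigma> j < k" if "j < k" for j using \<sigma> that by (auto simp: bij_betw_def)
      show "(\<Sum>j<k. (b \<circ> \<tau>) j * f j) = (\<Sum>j<k. b j * f (\<sigma> j))" for b f :: "nat \<Rightarrow> 'a"
        using reindex[OF \<sigma>, of "\<lambda>j. b (\<tau> j) * f j"] by (simp add: \<tau>\<sigma>)
      show "R' b \<longleftrightarrow> R (b \<circ> \<tau>)" for b
      proof -
        have "R (b \<circ> \<tau>) \<longleftrightarrow> R' (b \<circ> \<tau> \<circ> \<sigma>)" by (rule rel)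
        also have "\<dots> \<longleftrightarrow> R' b" by (rule cong) (simp add: \<tau>\<sigma>)
        finally show ?thesis by simp
      qed
    qed
  next
    assume "temperate_wrt R' k"
    then show "temperate_wrt R k"
    proof (rule temperate_wrt_reindex[where e = \<tau> and E = "\<lambda>b. b \<circ> \<sigma>"])
      show "\<tau> j < k" if "j < k" for j using \<tau> that by (auto simp: bij_betw_def)
      show "(\<Sum>j<k. (b \<circ> \<sigma>) j * f j) = (\<Sum>j<k. b j * f (\<tau> j))" for b f :: "nat \<Rightarrow> 'a"
        using reindex[OF \<tau>, of "\<lambda>j. b (\<sigma> j) * f j"] by (simp add: \<tau>\<sigma>)
    qed (fact rel)
  qed
qed

section \<open>Block-diagonal systems\<close>

definition block_relation ::
  "nat \<Rightarrow> ((nat \<Rightarrow> 'a) \<Rightarrow> bool) \<Rightarrow> ((nat \<Rightarrow> 'a) \<Rightarrow> bool) \<Rightarrow> (nat \<Rightarrow> 'a) \<Rightarrow> bool" where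
  "block_relation k1 R1 R2 b \<longleftrightarrow> R1 b \<and> R2 (\<lambda>j. b (k1 + j))"

lemma temperate_wrt_block_fst:
  assumes "temperate_wrt (block_relation k1 R1 R2) (k1 + k2)" "R2 (\<lambda>_. 0)"
    and cong1: "\<And>b b'. (\<And>j. j < k1 \<Longrightarrow> b j = b' j) \<Longrightarrow> R1 b \<longleftrightarrow> R1 b'"
  shows "temperate_wrt R1 k1"
  using assms(1)
proof (rule temperate_wrt_reindex[where e = id and E = "\<lambda>b j. if j < k1 then b j else 0"])
  show "R1 b \<longleftrightarrow> block_relation k1 R1 R2 (\<lambda>j. if j < k1 then b j else 0)" for b
  proof -
    have "R1 b \<longleftrightarrow> R1 (\<lambda>j. if j < k1 then b j else 0)" by (rule cong1) simp
    then show ?thesis using assms(2) by (simp add: block_relation_def)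
  qed
qed (simp_all add: sum_lessThan_add)

lemma temperate_wrt_block_snd:
  assumes "temperate_wrt (block_relation k1 R1 R2) (k1 + k2)" "R1 (\<lambda>_. 0)"
    and cong1: "\<And>b b'. (\<And>j. j < k1 \<Longrightarrow> b j = b' j) \<Longrightarrow> R1 b \<longleftrightarrow> R1 b'"
  shows "temperate_wrt R2 k2"
  using assms(1)
proof (rule temperate_wrt_reindex[where e = "\<lambda>j. k1 + j" and E = "\<lambda>b j. if j < k1 then 0 else b (j - k1)"])
  show "R2 b \<longleftrightarrow> block_relation k1 R1 R2 (\<lambda>j. if j < k1 then 0 else b (j - k1))" for b
  proof -
    have "R1 (\<lambda>j. if j < k1 then 0 else b (j - k1)) \<longleftrightarrow> R1 (\<lambda>_. 0)" by (rule cong1) simp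
    then show ?thesis using assms(2) by (simp add: block_relation_def)
  qed
qed (simp_all add: sum_lessThan_add)

text \<open>If a zero-sum dependency \<open>b\<close> of the concatenation has block sums \<open>s1\<close>, \<open>s2\<close>, then
  coordinate \<open>t0\<close> gives \<open>s1 c + s2 a = 0 = s1 + s2\<close>, so both sums vanish. On \<open>T\<close> the
  \<open>y\<close>-part then contributes \<open>s1 p t = 0\<close>, so the \<open>z\<close>-part vanishes on \<open>T\<close>, hence
  everywhere, and so does the \<open>y\<close>-part.\<close>
lemma generic_wrt_block:
  fixes y z :: "nat \<Rightarrow> nat \<Rightarrow> 'a::field"
  assumes gy: "generic_wrt R1 k1 n y" and gz: "generic_wrt R2 k2 n z"
    and determining: "\<And>b. \<forall>t\<in>T. (\<Sum>j<k2. b j * z j t) = 0 \<Longrightarrow> \<forall>t. (\<Sum>j<k2. b j * z j t) = 0"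
    and y_T: "\<And>j t. j < k1 \<Longrightarrow> t \<in> T \<Longrightarrow> y j t = p t"
    and t0: "t0 < n" and y_t0: "\<And>j. j < k1 \<Longrightarrow> y j t0 = c"
    and z_t0: "\<And>j. j < k2 \<Longrightarrow> z j t0 = a" and "c \<noteq> a"
  shows "generic_wrt (block_relation k1 R1 R2) (k1 + k2) n (\<lambda>j. if j < k1 then y j else z (j - k1))"
    (is "generic_wrt _ _ _ ?x")
proof -
  have dep_iff: "is_dependency (k1 + k2) n ?x b \<longleftrightarrow>
      (\<forall>t<n. (\<Sum>j<k1. b j * y j t) + (\<Sum>j<k2. b (k1 + j) * z j t) = 0)" for b
    by (simp add: is_dependency_def sum_lessThan_add)
  have y_vecs: "\<And>j. j < k1 \<Longrightarrow> y j \<in> vecs n" and z_vecs: "\<And>j. j < k2 \<Longrightarrow> z j \<in> vecs n"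
    using gy gz by (auto simp: generic_wrt_def)
  have sound: "is_dependency (k1 + k2) n ?x b" if "block_relation k1 R1 R2 b" for b
  proof -
    have "is_dependency k1 n y b" "is_dependency k2 n z (\<lambda>j. b (k1 + j))"
      using that gy gz by (auto simp: generic_wrt_def block_relation_def)
    then show ?thesis unfolding dep_iff by (simp add: is_dependency_def)
  qed
  have complete: "block_relation k1 R1 R2 b"
    if sum0: "(\<Sum>j<k1 + k2. b j) = 0" and dep: "is_dependency (k1 + k2) n ?x b" for b
  proof -
    define s1 where "s1 = (\<Sum>j<k1. b j)"
    define s2 where "s2 = (\<Sum>j<k2. b (k1 + j))"
    have s12: "s1 + s2 = 0" using sum0 by (simp add: sum_lessThan_add s1_def s2_def)
    have E: "\<And>t. t < n \<Longrightarrow> (\<Sum>j<k1. b j * y j t) + (\<Sum>j<k2. b (k1 + j) * z j t) = 0"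
      using dep by (simp add: dep_iff)
    have "s1 * c + s2 * a = 0"
      using E[OF t0] by (simp add: s1_def s2_def sum_distrib_right y_t0 z_t0)
    then have "s1 * (c - a) = 0" using s12 by (simp add: algebra_simps eq_neg_iff_add_eq_0[symmetric])
    then have s1: "s1 = 0" using \<open>c \<noteq> a\<close> by simp
    then have s2: "s2 = 0" using s12 by simp
    have "\<forall>t\<in>T. (\<Sum>j<k2. b (k1 + j) * z j t) = 0"
    proof
      fix t assume "t \<in> T"
      show "(\<Sum>j<k2. b (k1 + j) * z j t) = 0"
      proof (cases "t < n")
        case True
        have "(\<Sum>j<k1. b j * y j t) = s1 * p t"
          using \<open>t \<in> T\<close> by (simp add: s1_def sum_distrib_right y_T)
        then show ?thesis using E[OF True] s1 by simp
      next
        case False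
        then show ?thesis using z_vecs by (simp add: vecs_def)
      qed
    qed
    then have z_part: "\<forall>t. (\<Sum>j<k2. b (k1 + j) * z j t) = 0" by (rule determining)
    then have "is_dependency k2 n z (\<lambda>j. b (k1 + j))" by (simp add: is_dependency_def)
    then have "R2 (\<lambda>j. b (k1 + j))" using gz s2 by (auto simp: generic_wrt_def s2_def)
    moreover have "is_dependency k1 n y b" using E z_part by (simp add: is_dependency_def)
    then have "R1 b" using gy s1 by (auto simp: generic_wrt_def s1_def)
    ultimately show ?thesis by (simp add: block_relation_def)
  qed
  show ?thesis
    unfolding generic_wrt_def using y_vecs z_vecs sound complete by auto
qed

lemma exists_generic_block_solution:
  fixes S :: "(nat \<Rightarrow> 'a::{finite,field}) set"
  assumes S: "S \<subseteq> vecs n" "2 \<le> card S"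
    and large1: "\<And>C. C \<subseteq> S \<Longrightarrow> card S \<le> 2 * n * card (UNIV :: 'a set) ^ (k2 + 1) * card C \<Longrightarrow>
        \<exists>y. (\<forall>j<k1. y j \<in> C) \<and> generic_wrt R1 k1 n y"
    and large2: "\<And>Z. Z \<subseteq> S \<Longrightarrow> card S \<le> card (UNIV :: 'a set) * card Z \<Longrightarrow>
        \<exists>z. (\<forall>j<k2. z j \<in> Z) \<and> generic_wrt R2 k2 n z"
  shows "\<exists>x. (\<forall>j<k1 + k2. x j \<in> S) \<and> generic_wrt (block_relation k1 R1 R2) (k1 + k2) n x"
proof -
  let ?q = "card (UNIV :: 'a set)"
  have fin: "finite S" using S(2) card.infinite by fastforce
  obtain t0 a where t0: "t0 < n" and Z: "card S \<le> ?q * card {s\<in>S. s t0 = a}"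
    and Y: "card S \<le> 2 * n * card {s\<in>S. s t0 \<noteq> a}"
    by (rule exists_popular_coordinate[OF S])
  obtain z where zZ: "\<forall>j<k2. z j \<in> {s\<in>S. s t0 = a}" and gz: "generic_wrt R2 k2 n z"
    using large2[OF _ Z] by blast
  obtain T where T: "finite T" "card T \<le> k2"
    and determining: "\<forall>b. (\<forall>t\<in>T. (\<Sum>j<k2. b j * z j t) = 0) \<longrightarrow> (\<forall>t. (\<Sum>j<k2. b j * z j t) = 0)"
    using exists_determining_coordinates[of k2 z] by blast
  have "finite {s\<in>S. s t0 \<noteq> a}" "finite (insert t0 T)" using fin T(1) by simp_all
  then obtain C where C: "C \<subseteq> {s\<in>S. s t0 \<noteq> a}"
    and agree: "\<And>s s' t. s \<in> C \<Longrightarrow> s' \<in> C \<Longrightarrow> t \<in> insert t0 T \<Longrightarrow> s t = s' t"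
    and C_size: "card {s\<in>S. s t0 \<noteq> a} \<le> ?q ^ card (insert t0 T) * card C"
    by (rule exists_large_agreeing_subset) (rule that)
  have "0 < ?q" by (rule finite_UNIV_card_ge_0) simp
  moreover have "card (insert t0 T) \<le> k2 + 1" using T by (simp add: card_insert_if)
  ultimately have q_power: "?q ^ card (insert t0 T) \<le> ?q ^ (k2 + 1)" by (intro power_increasing) simp_all
  have "card S \<le> 2 * n * (?q ^ card (insert t0 T) * card C)"
    using Y C_size by (meson le_trans mult_le_mono2)
  also have "\<dots> \<le> 2 * n * ?q ^ (k2 + 1) * card C"
    using q_power by (simp add: mult.assoc)
  finally have C_large: "card S \<le> 2 * n * ?q ^ (k2 + 1) * card C" .
  obtain y where yC: "\<forall>j<k1. y j \<in> C" and gy: "generic_wrt R1 k1 n y"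
    using large1[OF _ C_large] C by blast
  have "C \<noteq> {}" using C_large S(2) by (intro notI) simp
  then obtain s0 where s0: "s0 \<in> C" by blast
  define x where "x = (\<lambda>j. if j < k1 then y j else z (j - k1))"
  have "generic_wrt (block_relation k1 R1 R2) (k1 + k2) n x"
    unfolding x_def
  proof (rule generic_wrt_block[OF gy gz _ _ t0])
    show "\<forall>t. (\<Sum>j<k2. b j * z j t) = 0" if "\<forall>t\<in>T. (\<Sum>j<k2. b j * z j t) = 0" for b
      using determining that by blast
    show "y j t = s0 t" if "j < k1" "t \<in> T" for j t using agree yC s0 that by blast
    show "y j t0 = s0 t0" if "j < k1" for j using agree yC s0 that by blast
    show "z j t0 = a" if "j < k2" for j using zZ that by blast
    show "s0 t0 \<noteq> a" using C s0 by blast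
  qed
  moreover have "\<forall>j<k1 + k2. x j \<in> S"
    using yC zZ C by (auto simp: x_def)
  ultimately show ?thesis by blast
qed

lemma temperate_wrt_block:
  fixes R1 R2 :: "(nat \<Rightarrow> 'a::{finite,field}) \<Rightarrow> bool"
  assumes "temperate_wrt R1 k1" "temperate_wrt R2 k2"
  shows "temperate_wrt (block_relation k1 R1 R2) (k1 + k2)"
proof -
  define q where "q = real (card (UNIV :: 'a set))"
  have "card {0::'a, 1} \<le> card (UNIV :: 'a set)" by (rule card_mono) auto
  then have q2: "2 \<le> q" by (simp add: q_def)
  obtain \<beta>1 \<gamma>1 :: real where \<beta>\<gamma>1: "\<beta>1 > 0" "\<gamma>1 > 0" "\<gamma>1 < q"
    and large1: "\<forall>n S. S \<subseteq> vecs n \<and> \<beta>1 * \<gamma>1 ^ n \<le> real (card S) \<longrightarrow>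
      (\<exists>x. (\<forall>j<k1. x j \<in> S) \<and> generic_wrt R1 k1 n x)"
    using assms(1) unfolding temperate_wrt_def q_def by blast
  obtain \<beta>2 \<gamma>2 :: real where \<beta>\<gamma>2: "\<beta>2 > 0" "\<gamma>2 > 0" "\<gamma>2 < q"
    and large2: "\<forall>n S. S \<subseteq> vecs n \<and> \<beta>2 * \<gamma>2 ^ n \<le> real (card S) \<longrightarrow>
      (\<exists>x. (\<forall>j<k2. x j \<in> S) \<and> generic_wrt R2 k2 n x)"
    using assms(2) unfolding temperate_wrt_def q_def by blast
  have "0 < q ^ (k2 + 1)" using q2 by simp
  with q2 \<beta>\<gamma>1 \<beta>\<gamma>2 obtain \<beta> \<gamma> where \<beta>: "0 < \<beta>" and \<gamma>: "0 < \<gamma>" "\<gamma> < q"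
    and two: "\<And>n. 2 \<le> \<beta> * \<gamma> ^ n"
    and loss1: "\<And>n s c. \<beta> * \<gamma> ^ n \<le> s \<Longrightarrow> s \<le> 2 * real n * q ^ (k2 + 1) * c \<Longrightarrow> \<beta>1 * \<gamma>1 ^ n \<le> c"
    and loss2: "\<And>n s z. \<beta> * \<gamma> ^ n \<le> s \<Longrightarrow> s \<le> q * z \<Longrightarrow> \<beta>2 * \<gamma>2 ^ n \<le> z"
    by (rule exists_growth_constants) (rule that)
  show ?thesis
  proof (rule temperate_wrtI[OF \<beta> \<gamma>(1) \<gamma>(2)[unfolded q_def]])
    fix n and S :: "(nat \<Rightarrow> 'a) set"
    assume S: "S \<subseteq> vecs n" and size: "\<beta> * \<gamma> ^ n \<le> real (card S)"
    have "2 \<le> real (card S)" using two[of n] size by linarith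
    then have "2 \<le> card S" by simp
    then show "\<exists>x. (\<forall>j<k1 + k2. x j \<in> S) \<and> generic_wrt (block_relation k1 R1 R2) (k1 + k2) n x"
    proof (rule exists_generic_block_solution[OF S])
      fix C assume "C \<subseteq> S" and C: "card S \<le> 2 * n * card (UNIV :: 'a set) ^ (k2 + 1) * card C"
      have "real (card S) \<le> real (2 * n * card (UNIV :: 'a set) ^ (k2 + 1) * card C)"
        using C by (rule of_nat_mono)
      then have "real (card S) \<le> 2 * real n * q ^ (k2 + 1) * real (card C)" by (simp add: q_def)
      then have "\<beta>1 * \<gamma>1 ^ n \<le> card C" by (rule loss1[OF size])
      then show "\<exists>y. (\<forall>j<k1. y j \<in> C) \<and> generic_wrt R1 k1 n y"
        using large1 \<open>C \<subseteq> S\<close> S by blast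
    next
      fix Z assume "Z \<subseteq> S" and Z: "card S \<le> card (UNIV :: 'a set) * card Z"
      have "real (card S) \<le> real (card (UNIV :: 'a set) * card Z)" using Z by (rule of_nat_mono)
      then have "real (card S) \<le> q * real (card Z)" by (simp add: q_def)
      then have "\<beta>2 * \<gamma>2 ^ n \<le> card Z" by (rule loss2[OF size])
      then show "\<exists>z. (\<forall>j<k2. z j \<in> Z) \<and> generic_wrt R2 k2 n z"
        using large2 \<open>Z \<subseteq> S\<close> S by blast
    qed
  qed
qed

lemma temperate_wrt_block_iff:
  fixes R1 R2 :: "(nat \<Rightarrow> 'a::{finite,field}) \<Rightarrow> bool"
  assumes "R1 (\<lambda>_. 0)" "R2 (\<lambda>_. 0)"
    and cong1: "\<And>b b'. (\<And>j. j < k1 \<Longrightarrow> b j = b' j) \<Longrightarrow> R1 b \<longleftrightarrow> R1 b'"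
  shows "temperate_wrt (block_relation k1 R1 R2) (k1 + k2) \<longleftrightarrow>
    temperate_wrt R1 k1 \<and> temperate_wrt R2 k2"
proof
  assume block: "temperate_wrt (block_relation k1 R1 R2) (k1 + k2)"
  have "temperate_wrt R1 k1" using block assms(2) cong1 by (rule temperate_wrt_block_fst)
  moreover have "temperate_wrt R2 k2" using block assms(1) cong1 by (rule temperate_wrt_block_snd)
  ultimately show "temperate_wrt R1 k1 \<and> temperate_wrt R2 k2" ..
next
  assume "temperate_wrt R1 k1 \<and> temperate_wrt R2 k2"
  then show "temperate_wrt (block_relation k1 R1 R2) (k1 + k2)" by (blast intro: temperate_wrt_block)
qed

theorem proposition5p4:
  fixes A B A1 A2 :: "nat \<Rightarrow> nat \<Rightarrow> 'a::{finite,field}"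
    and m k m1 k1 m2 k2 :: nat and \<sigma> :: "nat \<Rightarrow> nat"
  assumes "m1 \<noteq> 0" "m2 \<noteq> 0" "k1 \<noteq> 0" "k2 \<noteq> 0"
    and "k = k1 + k2"
    and "bij_betw \<sigma> {..<k} {..<k}"
    and "\<forall>i<m1+m2. \<forall>j<k. B i (\<sigma> j) = block_diag m1 k1 A1 A2 i j"
    and "equivalent_systems m A (m1 + m2) B k"
  shows "temperate m k A \<longleftrightarrow> temperate m1 k1 A1 \<and> temperate m2 k2 A2"
proof -
  let ?R1 = "in_row_space m1 k1 A1" and ?R2 = "in_row_space m2 k2 A2"
  have R1_cong: "\<And>b b'. (\<And>j. j < k1 \<Longrightarrow> b j = b' j) \<Longrightarrow> ?R1 b \<longleftrightarrow> ?R1 b'"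
    by (rule in_row_space_cong)
  have B_block: "in_row_space (m1 + m2) k B b \<longleftrightarrow> block_relation k1 ?R1 ?R2 (b \<circ> \<sigma>)" for b
  proof -
    have "in_row_space (m1 + m2) k B b \<longleftrightarrow> in_row_space (m1 + m2) k (block_diag m1 k1 A1 A2) (b \<circ> \<sigma>)"
      by (rule in_row_space_permute[OF assms(6)]) (use assms(7) in simp)
    then show ?thesis by (simp add: assms(5) in_row_space_block_diag block_relation_def)
  qed
  have block_cong: "block_relation k1 ?R1 ?R2 b \<longleftrightarrow> block_relation k1 ?R1 ?R2 b'"
    if "\<And>j. j < k \<Longrightarrow> b j = b' j" for b b'
    using in_row_space_cong[of k1 b b' m1 A1] in_row_space_cong[of k2 "\<lambda>j. b (k1 + j)" "\<lambda>j. b' (k1 + j)" m2 A2]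
      that by (simp add: assms(5) block_relation_def)
  have "temperate m k A \<longleftrightarrow> temperate_wrt (in_row_space (m1 + m2) k B) k"
    by (simp add: temperate_iff equivalent_systems_row_space[OF assms(8)])
  also have "\<dots> \<longleftrightarrow> temperate_wrt (block_relation k1 ?R1 ?R2) k"
    using assms(6) B_block block_cong by (rule temperate_wrt_permute)
  also have "\<dots> \<longleftrightarrow> temperate_wrt ?R1 k1 \<and> temperate_wrt ?R2 k2"
    unfolding assms(5) using in_row_space_zero in_row_space_zero R1_cong by (rule temperate_wrt_block_iff)
  also have "\<dots> \<longleftrightarrow> temperate m1 k1 A1 \<and> temperate m2 k2 A2" by (simp add: temperate_iff)
  finally show ?thesis .
qed

end
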